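(* Let $d,\mathfrak d,M\in\mathbb N$, $R,L,\mathcal R,\varepsilon\in(0,\infty)$, let $D\subseteq\mathbb R^d$ be compact, let $(\Omega,\mathcal F,\mathbb P)$ be a probability space, let $X_m\colon\Omega\to D$ and $Y_m\colon\Omega\to\mathbb R$, $m\in\{1,\dots,M\}$, be functions such that $(X_m,Y_m)$, $m\in\{1,\dots,M\}$, are i.i.d. random variables, let $H=(H_\theta)_{\theta\in[-R,R]^{\mathfrak d}}\colon[-R,R]^{\mathfrak d}\to C(D,\mathbb R)$ satisfy $|H_\theta(x)-H_\vartheta(x)|\le L\|\theta-\vartheta\|_\infty$ for all $\theta,\vartheta\in[-R,R]^{\mathfrak d}$, $x\in D$, assume $|H_\theta(X_m)-Y_m|\le\mathcal R$ for all $\theta\in[-R,R]^{\mathfrak d}$, $m\in\{1,\dots,M\}$ and $\mathbb E[|Y_1|^2]<\infty$, let $\mathcal E(f)=\mathbb E[|f(X_1)-Y_1|^2]$ for $f\in C(D,\mathbb R)$, and let $\mathfrak E(\theta,\omega)=\frac1M\sum_{m=1}^M|H_\theta(X_m(\omega))-Y_m(\omega)|^2$ for $\theta\in[-R,R]^{\mathfrak d}$, $\omega\in\Omega$. Then $\Omega\ni\omega\mapsto\sup_{\theta\in[-R,R]^{\mathfrak d}}|\mathfrak E(\theta,\omega)-\mathcal E(H_\theta)|\in[0,\infty]$ is $\mathcal F/\mathcal B([0,\infty])$-measurable and $$\mathbb P\bigl(\sup_{\theta\in[-R,R]^{\mathfrak d}}|\mathfrak E(\theta)-\mathcal E(H_\theta)|\ge\varepsilon\bigr)\le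 2\max\Bigl\{1,\Bigl[\frac{32LR\mathcal R}{\varepsilon}\Bigr]^{\mathfrak d}\Bigr\}\exp\Bigl(\frac{-\varepsilon^2M}{2\mathcal R^4}\Bigr).$$
   Context: $\|\cdot\|_\infty$ is the maximum norm on $\mathbb R^{\mathfrak d}$. *)

theory Defs
  imports "HOL-Probability.Probability"
begin

definition param_cube :: "nat \<Rightarrow> real \<Rightarrow> (nat \<Rightarrow> real) set" where
  "param_cube dd R = PiE {..<dd} (\<lambda>_. {-R..R})"

definition maxnorm_dist :: "nat \<Rightarrow> (nat \<Rightarrow> real) \<Rightarrow> (nat \<Rightarrow> real) \<Rightarrow> real" where
  "maxnorm_dist dd \<theta> \<phi> = Max (insert 0 ((\<lambda>i. \<bar>\<theta> i - \<phi> i\<bar>) ` {..<dd}))"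

definition emp_risk :: "nat \<Rightarrow> ((nat \<Rightarrow> real) \<Rightarrow> 'a \<Rightarrow> real) \<Rightarrow> (nat \<Rightarrow> 'w \<Rightarrow> 'a)
    \<Rightarrow> (nat \<Rightarrow> 'w \<Rightarrow> real) \<Rightarrow> (nat \<Rightarrow> real) \<Rightarrow> 'w \<Rightarrow> real" where
  "emp_risk M H X Y \<theta> \<omega> = (1 / real M) * (\<Sum>m=1..M. \<bar>H \<theta> (X m \<omega>) - Y m \<omega>\<bar>^2)"

definition risk :: "'w measure \<Rightarrow> (nat \<Rightarrow> 'w \<Rightarrow> 'a) \<Rightarrow> (nat \<Rightarrow> 'w \<Rightarrow> real) \<Rightarrow> ('a \<Rightarrow> real) \<Rightarrow> real" where
  "risk P X Y f = (\<integral>\<omega>. \<bar>f (X 1 \<omega>) - Y 1 \<omega>\<bar>^2 \<partial>P)"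

end

theory Submission
  imports Defs
begin

text \<open>For a fixed parameter the empirical risk is the mean of M i.i.d. random variables with
values in [0, RR^2], so by Hoeffding's inequality it deviates from the risk by at least \<epsilon>/2 with
probability at most 2 exp(-\<epsilon>^2 M / (2 RR^4)).  Both risks are 2 L RR-Lipschitz in the parameter
with respect to the maximum norm, hence their difference is 4 L RR-Lipschitz.  Consequently, if the
supremum of the deviation over the cube reaches \<epsilon>, the deviation is at least \<epsilon>/2 at some point
of a grid that is \<epsilon>/(16 L RR)-dense in the cube and has at most max 1 ((32 L R RR/\<epsilon>)^dd)
points, and a union bound over the grid gives the estimate.  The same Lipschitz property
identifies the supremum over the cube with a supremum over countably many grid points, which
makes it measurable.\<close>

text \<open>Midpoint of the k-th of n equal subintervals of [-R,R].\<close>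
definition grid_point :: "real \<Rightarrow> nat \<Rightarrow> nat \<Rightarrow> real" where
  "grid_point R n k = - R + (2 * real k + 1) * R / real n"

definition cube_grid :: "nat \<Rightarrow> real \<Rightarrow> nat \<Rightarrow> (nat \<Rightarrow> real) set" where
  "cube_grid dd R n = PiE {..<dd} (\<lambda>_. grid_point R n ` {..<n})"

lemma finite_cube_grid: "finite (cube_grid dd R n)"
  unfolding cube_grid_def by (intro finite_PiE) auto

lemma card_cube_grid_le: "card (cube_grid dd R n) \<le> n ^ dd"
proof -
  have "card (cube_grid dd R n) = (\<Prod>i\<in>{..<dd}. card (grid_point R n ` {..<n}))"
    unfolding cube_grid_def by (rule card_PiE) simp
  also have "\<dots> \<le> (\<Prod>i\<in>{..<dd}. n)"
    by (intro prod_mono) (auto intro: card_image_le[THEN order_trans])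
  finally show ?thesis by simp
qed

lemma grid_point_mem:
  assumes "R \<ge> 0" "k < n"
  shows "grid_point R n k \<in> {-R..R}"
proof -
  have "2 * real k + 1 \<le> 2 * real n"
    using assms by linarith
  from mult_right_mono[OF this assms(1)] have "(2 * real k + 1) * R \<le> 2 * R * real n"
    by (simp add: algebra_simps)
  then have "(2 * real k + 1) * R / real n \<le> 2 * R"
    using assms by (simp add: divide_le_eq)
  then show ?thesis
    using assms unfolding grid_point_def by simp
qed

lemma cube_grid_subset: "R \<ge> 0 \<Longrightarrow> cube_grid dd R n \<subseteq> param_cube dd R"
  unfolding cube_grid_def param_cube_def using grid_point_mem by (intro PiE_mono) auto

lemma grid_point_approx:
  assumes "R > 0" "n \<ge> 1" "t \<in> {-R..R}"
  shows "\<exists>k<n. \<bar>t - grid_point R n k\<bar> \<le> R / real n"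
proof -
  define s where "s = (t + R) * real n / (2 * R)"
  define k where "k = min (n - 1) (nat \<lfloor>s\<rfloor>)"
  have s: "0 \<le> s" "s \<le> real n"
    using assms unfolding s_def by (simp_all add: divide_le_eq)
  have close: "\<bar>s - (real k + 1/2)\<bar> \<le> 1/2"
  proof (cases "s < real n")
    case True
    then have "nat \<lfloor>s\<rfloor> \<le> n - 1"
      using floor_correct[of s] by linarith
    then have "real k = of_int \<lfloor>s\<rfloor>"
      using s unfolding k_def by simp
    then show ?thesis using floor_correct[of s] by linarith
  next
    case False
    with s assms show ?thesis unfolding k_def by simp
  qed
  have "t - grid_point R n k = (2 * R / real n) * (s - (real k + 1/2))"
    unfolding grid_point_def s_def using assms by (simp add: field_simps)
  then have "\<bar>t - grid_point R n k\<bar> = (2 * R / real n) * \<bar>s - (real k + 1/2)\<bar>"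
    using assms by (simp add: abs_mult)
  also have "\<dots> \<le> (2 * R / real n) * (1/2)"
    using close assms by (intro mult_left_mono) auto
  finally have "\<bar>t - grid_point R n k\<bar> \<le> R / real n"
    by simp
  moreover have "k < n"
    using assms unfolding k_def by simp
  ultimately show ?thesis by auto
qed

lemma maxnorm_dist_le:
  assumes "r \<ge> 0" "\<And>i. i < dd \<Longrightarrow> \<bar>\<theta> i - \<phi> i\<bar> \<le> r"
  shows "maxnorm_dist dd \<theta> \<phi> \<le> r"
  unfolding maxnorm_dist_def using assms by (subst Max_le_iff) auto

lemma cube_grid_approx:
  assumes "R > 0" "n \<ge> 1" "\<theta> \<in> param_cube dd R"
  obtains \<phi> where "\<phi> \<in> cube_grid dd R n" "maxnorm_dist dd \<theta> \<phi> \<le> R / real n"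
proof -
  have "\<forall>i\<in>{..<dd}. \<exists>k<n. \<bar>\<theta> i - grid_point R n k\<bar> \<le> R / real n"
    using assms grid_point_approx[OF assms(1,2)] unfolding param_cube_def by (auto simp: PiE_iff)
  then obtain k where k: "\<And>i. i < dd \<Longrightarrow> k i < n \<and> \<bar>\<theta> i - grid_point R n (k i)\<bar> \<le> R / real n"
    by (metis lessThan_iff)
  define \<phi> where "\<phi> = restrict (\<lambda>i. grid_point R n (k i)) {..<dd}"
  have "\<phi> \<in> cube_grid dd R n"
    unfolding \<phi>_def cube_grid_def using k by auto
  moreover have "maxnorm_dist dd \<theta> \<phi> \<le> R / real n"
    using k assms by (intro maxnorm_dist_le) (auto simp: \<phi>_def)
  ultimately show ?thesis by (rule that)
qed

lemma nat_ceiling_power_le: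
  fixes x :: real
  assumes "x \<ge> 0"
  shows "real (nat \<lceil>x\<rceil>) ^ k \<le> max 1 ((2 * x) ^ k)"
proof (cases "x \<le> 1")
  case True
  then have "real (nat \<lceil>x\<rceil>) \<le> 1"
    using assms by (simp add: ceiling_le_iff)
  then show ?thesis
    by (simp add: power_le_one max.coboundedI1)
next
  case False
  then have "real (nat \<lceil>x\<rceil>) \<le> 2 * x"
    using ceiling_correct[of x] by linarith
  then have "real (nat \<lceil>x\<rceil>) ^ k \<le> (2 * x) ^ k"
    by (intro power_mono) auto
  then show ?thesis
    by (rule order_trans[OF _ max.cobounded2])
qed

lemma SUP_param_cube_eq_SUP_grids:
  fixes f :: "(nat \<Rightarrow> real) \<Rightarrow> real"
  assumes "R > 0" "K \<ge> 0"
    and lip: "\<And>\<theta> \<phi>. \<theta> \<in> param_cube dd R \<Longrightarrow> \<phi> \<in> param_cube dd R \<Longrightarrow>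
                \<bar>f \<theta> - f \<phi>\<bar> \<le> K * maxnorm_dist dd \<theta> \<phi>"
  shows "(SUP \<theta>\<in>param_cube dd R. ennreal \<bar>f \<theta>\<bar>) =
         (SUP \<theta>\<in>(\<Union>n\<in>{1..}. cube_grid dd R n). ennreal \<bar>f \<theta>\<bar>)"
proof (rule antisym)
  show "(SUP \<theta>\<in>param_cube dd R. ennreal \<bar>f \<theta>\<bar>) \<le>
        (SUP \<theta>\<in>(\<Union>n\<in>{1..}. cube_grid dd R n). ennreal \<bar>f \<theta>\<bar>)"
  proof (rule SUP_least, rule ennreal_le_epsilon)
    fix \<theta> and e :: real
    assume \<theta>: "\<theta> \<in> param_cube dd R" and "0 < e"
    obtain n :: nat where "K * R / e < real n"
      using reals_Archimedean2 by blast
    moreover have "0 \<le> K * R / e"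
      using assms \<open>0 < e\<close> by simp
    ultimately have "real n > 0" "K * R < real n * e"
      using \<open>0 < e\<close> by (linarith, simp add: pos_divide_less_eq)
    then have "n \<ge> 1" "K * (R / real n) \<le> e"
      by (simp_all add: pos_divide_le_eq mult.commute)
    obtain \<phi> where \<phi>: "\<phi> \<in> cube_grid dd R n" "maxnorm_dist dd \<theta> \<phi> \<le> R / real n"
      using cube_grid_approx[OF assms(1) \<open>n \<ge> 1\<close> \<theta>] .
    have "\<phi> \<in> param_cube dd R"
      using \<phi>(1) cube_grid_subset[of R] assms(1) by auto
    then have "\<bar>f \<theta>\<bar> \<le> \<bar>f \<phi>\<bar> + K * (R / real n)"
      using lip[OF \<theta>] \<phi>(2) mult_left_mono[OF \<phi>(2) assms(2)] by fastforce
    then have "ennreal \<bar>f \<theta>\<bar> \<le> ennreal \<bar>f \<phi>\<bar> + ennreal e"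
      using \<open>K * (R / real n) \<le> e\<close> \<open>0 < e\<close> by (simp flip: ennreal_plus)
    also have "\<dots> \<le> (SUP \<theta>\<in>(\<Union>n\<in>{1..}. cube_grid dd R n). ennreal \<bar>f \<theta>\<bar>) + ennreal e"
      using \<phi>(1) \<open>n \<ge> 1\<close> by (intro add_right_mono SUP_upper) auto
    finally show "ennreal \<bar>f \<theta>\<bar> \<le> (SUP \<theta>\<in>(\<Union>n\<in>{1..}. cube_grid dd R n). ennreal \<bar>f \<theta>\<bar>) + ennreal e" .
  qed
  show "(SUP \<theta>\<in>(\<Union>n\<in>{1..}. cube_grid dd R n). ennreal \<bar>f \<theta>\<bar>) \<le>
        (SUP \<theta>\<in>param_cube dd R. ennreal \<bar>f \<theta>\<bar>)"
    using cube_grid_subset[of R] assms(1) by (intro SUP_subset_mono) auto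
qed

lemma SUP_param_cube_ge_imp_grid:
  fixes f :: "(nat \<Rightarrow> real) \<Rightarrow> real"
  assumes "R > 0" "K \<ge> 0" "\<epsilon> > 0" "n \<ge> 1" "K * (R / real n) \<le> \<epsilon> / 4"
    and lip: "\<And>\<theta> \<phi>. \<theta> \<in> param_cube dd R \<Longrightarrow> \<phi> \<in> param_cube dd R \<Longrightarrow>
                \<bar>f \<theta> - f \<phi>\<bar> \<le> K * maxnorm_dist dd \<theta> \<phi>"
    and "ennreal \<epsilon> \<le> (SUP \<theta>\<in>param_cube dd R. ennreal \<bar>f \<theta>\<bar>)"
  shows "\<exists>\<phi>\<in>cube_grid dd R n. \<epsilon> / 2 \<le> \<bar>f \<phi>\<bar>"
proof -
  have "ennreal (3 * \<epsilon> / 4) < ennreal \<epsilon>"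
    using assms(3) by (intro ennreal_lessI) auto
  also have "\<dots> \<le> (SUP \<theta>\<in>param_cube dd R. ennreal \<bar>f \<theta>\<bar>)"
    by fact
  finally obtain \<theta> where \<theta>: "\<theta> \<in> param_cube dd R" "3 * \<epsilon> / 4 < \<bar>f \<theta>\<bar>"
    using assms(3) by (auto simp: less_SUP_iff ennreal_less_iff)
  obtain \<phi> where \<phi>: "\<phi> \<in> cube_grid dd R n" "maxnorm_dist dd \<theta> \<phi> \<le> R / real n"
    using cube_grid_approx[OF assms(1,4) \<theta>(1)] .
  have "\<phi> \<in> param_cube dd R"
    using \<phi>(1) cube_grid_subset[of R] assms(1) by auto
  then have "\<bar>f \<theta>\<bar> \<le> \<bar>f \<phi>\<bar> + K * (R / real n)"
    using lip[OF \<theta>(1)] mult_left_mono[OF \<phi>(2) assms(2)] by fastforce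
  then show ?thesis
    using \<phi>(1) \<theta>(2) assms(5) by (intro bexI[of _ \<phi>]) auto
qed

lemma borel_measurable_SUP_param_cube:
  fixes F :: "(nat \<Rightarrow> real) \<Rightarrow> 'a \<Rightarrow> real"
  assumes "R > 0" "K \<ge> 0"
    and meas: "\<And>\<theta>. \<theta> \<in> param_cube dd R \<Longrightarrow> F \<theta> \<in> borel_measurable M"
    and lip: "\<And>\<theta> \<phi> \<omega>. \<theta> \<in> param_cube dd R \<Longrightarrow> \<phi> \<in> param_cube dd R \<Longrightarrow> \<omega> \<in> space M \<Longrightarrow>
           \<bar>F \<theta> \<omega> - F \<phi> \<omega>\<bar> \<le> K * maxnorm_dist dd \<theta> \<phi>"
  shows "(\<lambda>\<omega>. SUP \<theta>\<in>param_cube dd R. ennreal \<bar>F \<theta> \<omega>\<bar>) \<in> borel_measurable M"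
proof -
  let ?C = "\<Union>n\<in>{1::nat..}. cube_grid dd R n"
  have "countable ?C"
    by (intro countable_UN countable_subset[OF subset_UNIV countableI_type]
        countable_finite finite_cube_grid)
  moreover have "?C \<subseteq> param_cube dd R"
    using cube_grid_subset[of R] assms(1) by auto
  ultimately have "(\<lambda>\<omega>. SUP \<theta>\<in>?C. ennreal \<bar>F \<theta> \<omega>\<bar>) \<in> borel_measurable M"
    using meas by (intro borel_measurable_SUP) auto
  then show ?thesis
    using SUP_param_cube_eq_SUP_grids[OF assms(1,2) lip] by (subst measurable_cong) auto
qed

lemma (in prob_space) prob_SUP_param_cube_ge:
  fixes F :: "(nat \<Rightarrow> real) \<Rightarrow> 'a \<Rightarrow> real"
  assumes "R > 0" "K > 0" "\<epsilon> > 0"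
    and meas: "\<And>\<theta>. \<theta> \<in> param_cube dd R \<Longrightarrow> F \<theta> \<in> borel_measurable M"
    and lip: "\<And>\<theta> \<phi> \<omega>. \<theta> \<in> param_cube dd R \<Longrightarrow> \<phi> \<in> param_cube dd R \<Longrightarrow> \<omega> \<in> space M \<Longrightarrow>
           \<bar>F \<theta> \<omega> - F \<phi> \<omega>\<bar> \<le> K * maxnorm_dist dd \<theta> \<phi>"
    and tail: "\<And>\<theta>. \<theta> \<in> param_cube dd R \<Longrightarrow> prob {\<omega> \<in> space M. \<epsilon> / 2 \<le> \<bar>F \<theta> \<omega>\<bar>} \<le> p"
  shows "prob {\<omega> \<in> space M. ennreal \<epsilon> \<le> (SUP \<theta>\<in>param_cube dd R. ennreal \<bar>F \<theta> \<omega>\<bar>)}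
           \<le> max 1 ((8 * K * R / \<epsilon>) ^ dd) * p"
proof -
  define n where "n = nat \<lceil>4 * K * R / \<epsilon>\<rceil>"
  have "4 * K * R / \<epsilon> \<le> real n"
    unfolding n_def by (rule real_nat_ceiling_ge)
  moreover have "4 * K * R / \<epsilon> > 0"
    using assms by simp
  ultimately have "real n > 0" "4 * K * R \<le> real n * \<epsilon>"
    using assms(3) by (linarith, simp add: pos_divide_le_eq)
  then have "n \<ge> 1" "K * (R / real n) \<le> \<epsilon> / 4"
    by (simp_all add: pos_divide_le_eq algebra_simps)
  let ?A = "\<lambda>\<phi>. {\<omega> \<in> space M. \<epsilon> / 2 \<le> \<bar>F \<phi> \<omega>\<bar>}"
  have grid: "cube_grid dd R n \<subseteq> param_cube dd R"
    using cube_grid_subset[of R] assms(1) by auto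
  have "restrict (\<lambda>_. 0) {..<dd} \<in> param_cube dd R"
    using assms(1) by (simp add: param_cube_def)
  then have "p \<ge> 0"
    using tail measure_nonneg order_trans by blast
  have "prob {\<omega> \<in> space M. ennreal \<epsilon> \<le> (SUP \<theta>\<in>param_cube dd R. ennreal \<bar>F \<theta> \<omega>\<bar>)}
      \<le> prob (\<Union>\<phi>\<in>cube_grid dd R n. ?A \<phi>)"
    using SUP_param_cube_ge_imp_grid[OF assms(1) less_imp_le[OF assms(2)] assms(3) \<open>n \<ge> 1\<close>
        \<open>K * (R / real n) \<le> \<epsilon> / 4\<close> lip] meas grid
    by (intro finite_measure_mono sets.finite_UN finite_cube_grid) (auto, measurable)
  also have "\<dots> \<le> (\<Sum>\<phi>\<in>cube_grid dd R n. prob (?A \<phi>))"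
    using meas grid by (intro finite_measure_subadditive_finite finite_cube_grid) auto
  also have "\<dots> \<le> real (card (cube_grid dd R n)) * p"
    using tail grid by (intro sum_bounded_above) auto
  also have "\<dots> \<le> real n ^ dd * p"
    using card_cube_grid_le \<open>p \<ge> 0\<close> by (intro mult_right_mono) (auto simp flip: of_nat_power)
  also have "\<dots> \<le> max 1 ((8 * K * R / \<epsilon>) ^ dd) * p"
    using nat_ceiling_power_le[of "4 * K * R / \<epsilon>" dd] assms \<open>p \<ge> 0\<close>
    unfolding n_def by (intro mult_right_mono) (auto simp: mult.assoc)
  finally show ?thesis .
qed

lemma (in prob_space) Hoeffding_ineq_iid_compose:
  fixes V :: "'i \<Rightarrow> 'a \<Rightarrow> 'b" and f :: "'b \<Rightarrow> real"
  assumes "finite I" "i0 \<in> I"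
    and indep: "indep_vars (\<lambda>_. N) V I"
    and distr: "\<And>i. i \<in> I \<Longrightarrow> distr M N (V i) = distr M N (V i0)"
    and f: "f \<in> borel_measurable N"
    and bounded: "\<And>\<omega>. \<omega> \<in> space M \<Longrightarrow> f (V i0 \<omega>) \<in> {a..b}"
    and "a < b" "\<delta> \<ge> 0"
  shows "prob {\<omega> \<in> space M.
            \<delta> \<le> \<bar>(\<Sum>i\<in>I. f (V i \<omega>)) / real (card I) - expectation (\<lambda>\<omega>. f (V i0 \<omega>))\<bar>}
           \<le> 2 * exp (- 2 * real (card I) * \<delta>^2 / (b - a)^2)"
proof -
  have V: "V i \<in> measurable M N" if "i \<in> I" for i
    using indep that unfolding indep_vars_def by auto
  interpret Hoeffding_ineq_iid M I "\<lambda>i \<omega>. f (V i \<omega>)" "\<lambda>\<omega>. f (V i0 \<omega>)" a b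
      "expectation (\<lambda>\<omega>. f (V i0 \<omega>))"
  proof unfold_locales
    show "indep_vars (\<lambda>_. borel) (\<lambda>i \<omega>. f (V i \<omega>)) I"
      using indep_vars_compose2[OF indep, of "\<lambda>_. f"] f by simp
    show "distr M borel (\<lambda>\<omega>. f (V i \<omega>)) = distr M borel (\<lambda>\<omega>. f (V i0 \<omega>))" if "i \<in> I" for i
      using distr_distr[OF f V[OF that]] distr_distr[OF f V[OF assms(2)]] distr[OF that]
      by (simp add: comp_def)
    show "random_variable borel (\<lambda>\<omega>. f (V i0 \<omega>))"
      using measurable_compose[OF V[OF assms(2)] f] .
    show "AE \<omega> in M. f (V i0 \<omega>) \<in> {a..b}"
      using bounded by (rule AE_I2)
  qed fact
  have "I \<noteq> {}"
    using assms(2) by auto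
  from Hoeffding_ineq_abs_ge'[OF \<open>\<delta> \<ge> 0\<close> \<open>a < b\<close> this] show ?thesis .
qed

text \<open>The cut-off outside D makes the loss a Borel function of the pair (x, y) although h is
only continuous on D.\<close>
definition sq_loss_on :: "'a set \<Rightarrow> ('a \<Rightarrow> real) \<Rightarrow> 'a \<times> real \<Rightarrow> real" where
  "sq_loss_on D h p = indicator D (fst p) * \<bar>h (fst p) - snd p\<bar>^2"

lemma sq_loss_on_eq: "x \<in> D \<Longrightarrow> sq_loss_on D h (x, y) = \<bar>h x - y\<bar>^2"
  by (simp add: sq_loss_on_def)

lemma borel_measurable_sq_loss_on:
  fixes D :: "'a::second_countable_topology set"
  assumes "D \<in> sets borel" "continuous_on D h"
  shows "sq_loss_on D h \<in> borel_measurable borel"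
proof -
  have "continuous_on (D \<times> UNIV) (\<lambda>p::'a \<times> real. \<bar>h (fst p) - snd p\<bar>^2)"
    by (intro continuous_intros continuous_on_compose2[OF assms(2)]) auto
  moreover have "D \<times> UNIV \<in> sets (borel :: ('a \<times> real) measure)"
    using assms(1) unfolding borel_prod[symmetric] by (intro pair_measureI) auto
  ultimately have "(\<lambda>p. indicator (D \<times> UNIV) p *\<^sub>R \<bar>h (fst p) - snd p\<bar>^2) \<in> borel_measurable borel"
    by (intro borel_measurable_continuous_on_indicator)
  then show ?thesis
    unfolding sq_loss_on_def by (simp add: indicator_def mem_Times_iff)
qed

lemma borel_measurable_sq_loss:
  fixes X :: "'w \<Rightarrow> 'a::second_countable_topology" and Y :: "'w \<Rightarrow> real"
    and h :: "'a \<Rightarrow> real"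
  assumes "D \<in> sets borel" "continuous_on D h"
    and "(\<lambda>\<omega>. (X \<omega>, Y \<omega>)) \<in> borel_measurable N"
    and "\<And>\<omega>. \<omega> \<in> space N \<Longrightarrow> X \<omega> \<in> D"
  shows "(\<lambda>\<omega>. \<bar>h (X \<omega>) - Y \<omega>\<bar>^2) \<in> borel_measurable N"
proof -
  from measurable_compose[OF assms(3) borel_measurable_sq_loss_on[OF assms(1,2)]]
  have "(\<lambda>\<omega>. sq_loss_on D h (X \<omega>, Y \<omega>)) \<in> borel_measurable N" .
  then show ?thesis
    using assms(4) by (subst measurable_cong[symmetric]) (auto simp: sq_loss_on_eq)
qed

lemma abs_sq_diff_le:
  fixes a b :: real
  assumes "\<bar>a\<bar> \<le> c" "\<bar>b\<bar> \<le> c" "\<bar>a - b\<bar> \<le> e"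
  shows "\<bar>\<bar>a\<bar>^2 - \<bar>b\<bar>^2\<bar> \<le> 2 * c * e"
proof -
  have "\<bar>\<bar>a\<bar>^2 - \<bar>b\<bar>^2\<bar> = \<bar>a - b\<bar> * \<bar>a + b\<bar>"
    by (simp add: power2_eq_square abs_mult[symmetric] algebra_simps)
  also have "\<dots> \<le> e * (2 * c)"
    using assms by (intro mult_mono) auto
  finally show ?thesis
    by (simp add: mult_ac)
qed

lemma emp_risk_diff_le:
  assumes "M \<ge> 1"
    and "\<And>m. m \<in> {1..M} \<Longrightarrow> \<bar>H \<theta> (X m \<omega>) - Y m \<omega>\<bar> \<le> c"
    and "\<And>m. m \<in> {1..M} \<Longrightarrow> \<bar>H \<phi> (X m \<omega>) - Y m \<omega>\<bar> \<le> c"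
    and "\<And>m. m \<in> {1..M} \<Longrightarrow> \<bar>H \<theta> (X m \<omega>) - H \<phi> (X m \<omega>)\<bar> \<le> e"
  shows "\<bar>emp_risk M H X Y \<theta> \<omega> - emp_risk M H X Y \<phi> \<omega>\<bar> \<le> 2 * c * e"
proof -
  have "\<bar>emp_risk M H X Y \<theta> \<omega> - emp_risk M H X Y \<phi> \<omega>\<bar>
      = \<bar>\<Sum>m=1..M. \<bar>H \<theta> (X m \<omega>) - Y m \<omega>\<bar>^2 - \<bar>H \<phi> (X m \<omega>) - Y m \<omega>\<bar>^2\<bar> / real M"
    unfolding emp_risk_def by (simp add: sum_subtractf abs_divide flip: diff_divide_distrib)
  also have "\<dots> \<le> (\<Sum>m=1..M. 2 * c * e) / real M"
    using assms by (intro divide_right_mono order_trans[OF sum_abs sum_mono] abs_sq_diff_le) auto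
  also have "\<dots> = 2 * c * e"
    using assms(1) by simp
  finally show ?thesis .
qed

lemma risk_diff_le:
  assumes "prob_space P"
    and "(\<lambda>\<omega>. \<bar>f (X 1 \<omega>) - Y 1 \<omega>\<bar>^2) \<in> borel_measurable P"
    and "(\<lambda>\<omega>. \<bar>g (X 1 \<omega>) - Y 1 \<omega>\<bar>^2) \<in> borel_measurable P"
    and "\<And>\<omega>. \<omega> \<in> space P \<Longrightarrow> \<bar>f (X 1 \<omega>) - Y 1 \<omega>\<bar> \<le> c"
    and "\<And>\<omega>. \<omega> \<in> space P \<Longrightarrow> \<bar>g (X 1 \<omega>) - Y 1 \<omega>\<bar> \<le> c"
    and "\<And>\<omega>. \<omega> \<in> space P \<Longrightarrow> \<bar>f (X 1 \<omega>) - g (X 1 \<omega>)\<bar> \<le> e"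
  shows "\<bar>risk P X Y f - risk P X Y g\<bar> \<le> 2 * c * e"
proof -
  interpret P: prob_space P by fact
  let ?d = "\<lambda>\<omega>. \<bar>f (X 1 \<omega>) - Y 1 \<omega>\<bar>^2 - \<bar>g (X 1 \<omega>) - Y 1 \<omega>\<bar>^2"
  have "\<bar>f (X 1 \<omega>) - Y 1 \<omega>\<bar>^2 \<le> c^2" "\<bar>g (X 1 \<omega>) - Y 1 \<omega>\<bar>^2 \<le> c^2"
    if "\<omega> \<in> space P" for \<omega>
    by (intro power_mono assms(4,5)[OF that] abs_ge_zero)+
  then have "integrable P (\<lambda>\<omega>. \<bar>f (X 1 \<omega>) - Y 1 \<omega>\<bar>^2)" "integrable P (\<lambda>\<omega>. \<bar>g (X 1 \<omega>) - Y 1 \<omega>\<bar>^2)"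
    using assms(2,3) by (auto intro!: P.integrable_const_bound[where B = "c^2"] AE_I2)
  then have "integrable P ?d" "risk P X Y f - risk P X Y g = P.expectation ?d"
    unfolding risk_def by simp_all
  then have "\<bar>risk P X Y f - risk P X Y g\<bar> \<le> P.expectation (\<lambda>\<omega>. \<bar>?d \<omega>\<bar>)"
    by simp
  also have "\<dots> \<le> 2 * c * e"
    using \<open>integrable P ?d\<close> assms(4-6) by (intro P.integral_le_const AE_I2 abs_sq_diff_le) auto
  finally show ?thesis .
qed

lemma prob_emp_risk_deviation_ge:
  fixes X :: "nat \<Rightarrow> 'w \<Rightarrow> 'a::second_countable_topology" and Y :: "nat \<Rightarrow> 'w \<Rightarrow> real"
  assumes "prob_space P" "M \<ge> 1" "D \<in> sets borel" "continuous_on D (H \<theta>)"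
    and in_D: "\<And>m \<omega>. m \<in> {1..M} \<Longrightarrow> \<omega> \<in> space P \<Longrightarrow> X m \<omega> \<in> D"
    and indep: "prob_space.indep_vars P (\<lambda>_. borel) (\<lambda>m \<omega>. (X m \<omega>, Y m \<omega>)) {1..M}"
    and distr: "\<And>m. m \<in> {1..M} \<Longrightarrow>
           distr P borel (\<lambda>\<omega>. (X m \<omega>, Y m \<omega>)) = distr P borel (\<lambda>\<omega>. (X 1 \<omega>, Y 1 \<omega>))"
    and bounded: "\<And>\<omega>. \<omega> \<in> space P \<Longrightarrow> \<bar>H \<theta> (X 1 \<omega>) - Y 1 \<omega>\<bar> \<le> c"
    and "c > 0" "\<delta> \<ge> 0"
  shows "measure P {\<omega> \<in> space P. \<delta> \<le> \<bar>emp_risk M H X Y \<theta> \<omega> - risk P X Y (H \<theta>)\<bar>}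
           \<le> 2 * exp (- 2 * real M * \<delta>^2 / c^4)"
proof -
  interpret P: prob_space P by fact
  let ?loss = "sq_loss_on D (H \<theta>)"
  have "1 \<in> {1..M}"
    using assms(2) by simp
  have emp_risk: "emp_risk M H X Y \<theta> \<omega>
      = (\<Sum>m\<in>{1..M}. ?loss (X m \<omega>, Y m \<omega>)) / real (card {1..M})" if "\<omega> \<in> space P" for \<omega>
    unfolding emp_risk_def using in_D[OF _ that] by (simp add: sq_loss_on_eq)
  have risk: "risk P X Y (H \<theta>) = P.expectation (\<lambda>\<omega>. ?loss (X 1 \<omega>, Y 1 \<omega>))"
    unfolding risk_def using in_D[OF \<open>1 \<in> {1..M}\<close>]
    by (intro Bochner_Integration.integral_cong) (simp_all add: sq_loss_on_eq)
  have "?loss (X 1 \<omega>, Y 1 \<omega>) \<in> {0..c^2}" if "\<omega> \<in> space P" for \<omega>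
    using power_mono[OF bounded[OF that] abs_ge_zero, of 2] in_D[OF \<open>1 \<in> {1..M}\<close> that]
    by (simp add: sq_loss_on_eq)
  then have "P.prob {\<omega> \<in> space P. \<delta> \<le> \<bar>(\<Sum>m\<in>{1..M}. ?loss (X m \<omega>, Y m \<omega>)) / real (card {1..M})
                                   - P.expectation (\<lambda>\<omega>. ?loss (X 1 \<omega>, Y 1 \<omega>))\<bar>}
      \<le> 2 * exp (- 2 * real (card {1..M}) * \<delta>^2 / (c^2 - 0)^2)"
    using assms(3,4,9,10) \<open>1 \<in> {1..M}\<close>
    by (intro P.Hoeffding_ineq_iid_compose[OF _ _ indep distr] borel_measurable_sq_loss_on) auto
  then show ?thesis
    using emp_risk risk by (simp add: power_mult[symmetric] cong: conj_cong)
qed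

theorem lemma3p20:
  fixes P :: "'w measure"
    and D :: "'a::euclidean_space set"
    and X :: "nat \<Rightarrow> 'w \<Rightarrow> 'a" and Y :: "nat \<Rightarrow> 'w \<Rightarrow> real"
    and H :: "(nat \<Rightarrow> real) \<Rightarrow> 'a \<Rightarrow> real"
    and dd M :: nat and R L RR \<epsilon> :: real
  assumes "1 \<le> dd" and "1 \<le> M"
    and "R > 0" and "L > 0" and "RR > 0" and "\<epsilon> > 0"
    and "compact D"
    and "prob_space P"
    and "\<And>m \<omega>. m \<in> {1..M} \<Longrightarrow> \<omega> \<in> space P \<Longrightarrow> X m \<omega> \<in> D"
    and "prob_space.indep_vars P (\<lambda>_. borel) (\<lambda>m \<omega>. (X m \<omega>, Y m \<omega>)) {1..M}"
    and "\<And>m. m \<in> {1..M} \<Longrightarrow>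
           distr P borel (\<lambda>\<omega>. (X m \<omega>, Y m \<omega>)) = distr P borel (\<lambda>\<omega>. (X 1 \<omega>, Y 1 \<omega>))"
    and "\<And>\<theta>. \<theta> \<in> param_cube dd R \<Longrightarrow> continuous_on D (H \<theta>)"
    and "\<And>\<theta> \<phi> x. \<theta> \<in> param_cube dd R \<Longrightarrow> \<phi> \<in> param_cube dd R \<Longrightarrow> x \<in> D \<Longrightarrow>
           \<bar>H \<theta> x - H \<phi> x\<bar> \<le> L * maxnorm_dist dd \<theta> \<phi>"
    and "\<And>\<theta> m \<omega>. \<theta> \<in> param_cube dd R \<Longrightarrow> m \<in> {1..M} \<Longrightarrow> \<omega> \<in> space P \<Longrightarrow>
           \<bar>H \<theta> (X m \<omega>) - Y m \<omega>\<bar> \<le> RR"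
    and "integrable P (\<lambda>\<omega>. \<bar>Y 1 \<omega>\<bar>^2)"
  shows "(\<lambda>\<omega>. SUP \<theta>\<in>param_cube dd R.
            ennreal \<bar>emp_risk M H X Y \<theta> \<omega> - risk P X Y (H \<theta>)\<bar>) \<in> borel_measurable P
    \<and> measure P {\<omega> \<in> space P. (SUP \<theta>\<in>param_cube dd R.
            ennreal \<bar>emp_risk M H X Y \<theta> \<omega> - risk P X Y (H \<theta>)\<bar>) \<ge> ennreal \<epsilon>}
      \<le> 2 * max 1 ((32 * L * R * RR / \<epsilon>) ^ dd) * exp (- (\<epsilon>^2 * real M) / (2 * RR^4))"
proof -
  interpret P: prob_space P by fact
  let ?cube = "param_cube dd R"
  define dev where "dev \<theta> \<omega> = emp_risk M H X Y \<theta> \<omega> - risk P X Y (H \<theta>)" for \<theta> \<omega>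
  have D: "D \<in> sets borel"
    using \<open>compact D\<close> by (simp add: borel_compact)
  have sq_meas: "(\<lambda>\<omega>. \<bar>H \<theta> (X m \<omega>) - Y m \<omega>\<bar>^2) \<in> borel_measurable P"
    if "\<theta> \<in> ?cube" "m \<in> {1..M}" for \<theta> m
    using assms(9,10) that unfolding P.indep_vars_def
    by (intro borel_measurable_sq_loss[OF D assms(12)[OF that(1)]]) auto
  have dev_meas: "dev \<theta> \<in> borel_measurable P" if "\<theta> \<in> ?cube" for \<theta>
    unfolding dev_def emp_risk_def using sq_meas[OF that] by measurable
  have dev_lip: "\<bar>dev \<theta> \<omega> - dev \<phi> \<omega>\<bar> \<le> (4 * RR * L) * maxnorm_dist dd \<theta> \<phi>"
    if "\<theta> \<in> ?cube" "\<phi> \<in> ?cube" "\<omega> \<in> space P" for \<theta> \<phi> \<omega>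
  proof -
    have "\<bar>emp_risk M H X Y \<theta> \<omega> - emp_risk M H X Y \<phi> \<omega>\<bar> \<le> 2 * RR * (L * maxnorm_dist dd \<theta> \<phi>)"
      using that assms(2,9) by (intro emp_risk_diff_le assms(13,14)) auto
    moreover have "\<bar>risk P X Y (H \<theta>) - risk P X Y (H \<phi>)\<bar> \<le> 2 * RR * (L * maxnorm_dist dd \<theta> \<phi>)"
      using that assms(2,9) by (intro risk_diff_le sq_meas assms(8,13,14)) auto
    ultimately show ?thesis
      unfolding dev_def by (simp add: abs_le_iff)
  qed
  have dev_tail: "P.prob {\<omega> \<in> space P. \<epsilon> / 2 \<le> \<bar>dev \<theta> \<omega>\<bar>}
      \<le> 2 * exp (- (\<epsilon>^2 * real M) / (2 * RR^4))" if "\<theta> \<in> ?cube" for \<theta>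
  proof -
    have "P.prob {\<omega> \<in> space P. \<epsilon> / 2 \<le> \<bar>dev \<theta> \<omega>\<bar>} \<le> 2 * exp (- 2 * real M * (\<epsilon> / 2)^2 / RR^4)"
      unfolding dev_def using assms(2,5,6)
      by (intro prob_emp_risk_deviation_ge[where D = D] D assms(8-11) assms(12,14)[OF that]) auto
    also have "\<dots> = 2 * exp (- (\<epsilon>^2 * real M) / (2 * RR^4))"
      by (simp add: power_divide)
    finally show ?thesis .
  qed
  have "32 * L * R * RR / \<epsilon> = 8 * (4 * RR * L) * R / \<epsilon>"
    by simp
  then show ?thesis
    using P.prob_SUP_param_cube_ge[OF assms(3) _ assms(6) dev_meas dev_lip dev_tail]
      borel_measurable_SUP_param_cube[OF assms(3) _ dev_meas dev_lip] assms(4,5)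
    unfolding dev_def by (simp add: mult_ac)
qed

end
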